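(* Let $G=(V,E)$ be an $S$-regular graph with cells $V_1,\dots,V_k$, $n_i=|V_i|$, and let $B,C\subseteq V$, with $B_i=B\cap V_i$, $C_j=C\cap V_j$, $b_i=|B_i|/n_i$, $c_j=|C_j|/n_j$. Then \[\Bigl|\,|E(B,C)|-\sum_{i=1}^k\sum_{j=1}^k\sqrt{\tfrac{s_{ij}s_{ji}}{n_in_j}}\,|B_i||C_j|\,\Bigr|\le\lambda_B\sqrt{\sum_{i=1}^k\sum_{j=1}^k|B_i||C_j|(1-b_i)(1-c_j)}.\]
   Context: All graphs are simple, undirected and connected. $G$ is $S$-regular ($S=(s_{ij})$ a $k\times k$ nonnegative integer matrix) if $V$ is partitioned into nonempty cells $V_1,\dots,V_k$ such that every vertex of $V_i$ has exactly $s_{ij}$ neighbours in $V_j$. $|E(B,C)|$ denotes the number of pairs $(u,v)\in B\times C$ with $uv\in E$ (i.e. $\mathbf{1}_B^TA\mathbf{1}_C$, $A$ the adjacency matrix). The subspace $W=\mathrm{span}\{\mathbf{1}_{V_1},\dots,\mathbf{1}_{V_k}\}$ is $A$-invariant with eigenvalues on $W$ equal to those of $S$; the eigenvalues of $A$ on $W^\perp$ are the bulk eigenvalues (assume $|V|>k$), and $\lambda_B$ is the largest absolute value of a bulk eigenvalue. *)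

theory Defs
  imports Complex_Main
begin

definition simple_graph :: "'a set \<Rightarrow> ('a \<Rightarrow> 'a \<Rightarrow> bool) \<Rightarrow> bool" where
  "simple_graph V E \<longleftrightarrow> finite V \<and> (\<forall>u v. E u v \<longrightarrow> u \<in> V \<and> v \<in> V)
     \<and> (\<forall>u v. E u v \<longrightarrow> E v u) \<and> (\<forall>u. \<not> E u u)"

definition connected_graph :: "'a set \<Rightarrow> ('a \<Rightarrow> 'a \<Rightarrow> bool) \<Rightarrow> bool" where
  "connected_graph V E \<longleftrightarrow> V \<noteq> {} \<and> (\<forall>u\<in>V. \<forall>v\<in>V. E\<^sup>*\<^sup>* u v)"

definition S_regular ::
  "'a set \<Rightarrow> ('a \<Rightarrow> 'a \<Rightarrow> bool) \<Rightarrow> nat \<Rightarrow> (nat \<Rightarrow> 'a set) \<Rightarrow> (nat \<Rightarrow> nat \<Rightarrow> nat) \<Rightarrow> bool" where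
  "S_regular V E k P S \<longleftrightarrow>
     (\<forall>i<k. P i \<noteq> {} \<and> P i \<subseteq> V)
   \<and> (\<forall>i<k. \<forall>j<k. i \<noteq> j \<longrightarrow> P i \<inter> P j = {})
   \<and> (\<Union>i<k. P i) = V
   \<and> (\<forall>i<k. \<forall>j<k. \<forall>u\<in>P i. card {v \<in> P j. E u v} = S i j)"

definition adj_op :: "'a set \<Rightarrow> ('a \<Rightarrow> 'a \<Rightarrow> bool) \<Rightarrow> ('a \<Rightarrow> real) \<Rightarrow> 'a \<Rightarrow> real" where
  "adj_op V E f u = (\<Sum>v\<in>V. if E u v then f v else 0)"

definition W_perp :: "'a set \<Rightarrow> nat \<Rightarrow> (nat \<Rightarrow> 'a set) \<Rightarrow> ('a \<Rightarrow> real) set" where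
  "W_perp V k P = {f. (\<forall>x. x \<notin> V \<longrightarrow> f x = 0) \<and> (\<forall>i<k. (\<Sum>v\<in>P i. f v) = 0)}"

definition bulk_eigenvalues ::
  "'a set \<Rightarrow> ('a \<Rightarrow> 'a \<Rightarrow> bool) \<Rightarrow> nat \<Rightarrow> (nat \<Rightarrow> 'a set) \<Rightarrow> real set" where
  "bulk_eigenvalues V E k P = {\<mu>. \<exists>f\<in>W_perp V k P. (\<exists>x\<in>V. f x \<noteq> 0) \<and>
       (\<forall>u\<in>V. adj_op V E f u = \<mu> * f u)}"

definition lambda_B ::
  "'a set \<Rightarrow> ('a \<Rightarrow> 'a \<Rightarrow> bool) \<Rightarrow> nat \<Rightarrow> (nat \<Rightarrow> 'a set) \<Rightarrow> real" where
  "lambda_B V E k P = Max (abs ` bulk_eigenvalues V E k P)"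

definition edges_between :: "('a \<Rightarrow> 'a \<Rightarrow> bool) \<Rightarrow> 'a set \<Rightarrow> 'a set \<Rightarrow> nat" where
  "edges_between E B C = card {(u, v). u \<in> B \<and> v \<in> C \<and> E u v}"

end

(*
  Split the indicator of B as 1_B = b + x_B, where b takes the value b_i on the cell V_i (so b
  lies in W) and x_B lies in W^perp; likewise 1_C = c + x_C. Since A is symmetric and W, W^perp
  are both A-invariant, |E(B,C)| = <1_B, A 1_C> = <b, A c> + <x_B, A x_C>. The first term is the
  double sum: double counting the edges between two cells gives n_i s_ij = n_j s_ji, so
  s_ij / n_j = sqrt (s_ij s_ji / (n_i n_j)). For the second, |x_B|^2 = sum_i |B_i| (1 - b_i), and
  |<x, A y>| <= lambda_B |x| |y| on W^perp: the extrema of the Rayleigh quotient on the compact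
  unit sphere of W^perp are attained at bulk eigenvectors, and polarization passes from the
  quadratic form to the bilinear one.
*)

theory Submission
  imports Defs "HOL-Analysis.Function_Topology"
begin

definition inner_on :: "'a set \<Rightarrow> ('a \<Rightarrow> real) \<Rightarrow> ('a \<Rightarrow> real) \<Rightarrow> real" where
  "inner_on V f g = (\<Sum>v\<in>V. f v * g v)"

lemma inner_on_commute: "inner_on V f g = inner_on V g f"
  unfolding inner_on_def by (simp add: mult.commute)

lemma inner_on_lincomb_left:
  "inner_on V (\<lambda>v. a * f v + b * g v) h = a * inner_on V f h + b * inner_on V g h"
  unfolding inner_on_def by (simp add: sum.distrib sum_distrib_left algebra_simps)

lemma inner_on_lincomb_right:
  "inner_on V h (\<lambda>v. a * f v + b * g v) = a * inner_on V h f + b * inner_on V h g"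
  unfolding inner_on_def by (simp add: sum.distrib sum_distrib_left algebra_simps)

lemma inner_on_scale_left: "inner_on V (\<lambda>v. c * f v) g = c * inner_on V f g"
  using inner_on_lincomb_left[of V c f 0 f g] by simp

lemma inner_on_scale_right: "inner_on V g (\<lambda>v. c * f v) = c * inner_on V g f"
  using inner_on_lincomb_right[of V g c f 0 f] by simp

lemma inner_on_diff_left: "inner_on V (\<lambda>v. f v - g v) h = inner_on V f h - inner_on V g h"
  using inner_on_lincomb_left[of V 1 f "-1" g h] by simp

lemma inner_on_diff_right: "inner_on V h (\<lambda>v. f v - g v) = inner_on V h f - inner_on V h g"
  using inner_on_lincomb_right[of V h 1 f "-1" g] by simp

lemma inner_on_self_lincomb:
  "inner_on V (\<lambda>v. f v + t * g v) (\<lambda>v. f v + t * g v)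
     = inner_on V f f + 2 * t * inner_on V f g + t\<^sup>2 * inner_on V g g"
  unfolding inner_on_def by (simp add: sum.distrib sum_distrib_left algebra_simps power2_eq_square)

lemma inner_on_cong:
  "(\<And>v. v \<in> V \<Longrightarrow> f v = f' v) \<Longrightarrow> (\<And>v. v \<in> V \<Longrightarrow> g v = g' v) \<Longrightarrow>
   inner_on V f g = inner_on V f' g'"
  unfolding inner_on_def by simp

lemma inner_on_vanishing_left: "(\<And>v. v \<in> V \<Longrightarrow> f v = 0) \<Longrightarrow> inner_on V f g = 0"
  unfolding inner_on_def by simp

lemma inner_on_self_nonneg: "inner_on V f f \<ge> 0"
  unfolding inner_on_def by (simp add: sum_nonneg)

lemma inner_on_self_eq_0_iff: "finite V \<Longrightarrow> inner_on V f f = 0 \<longleftrightarrow> (\<forall>v\<in>V. f v = 0)"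
  unfolding inner_on_def by (subst sum_nonneg_eq_0_iff) auto

lemma inner_on_self_pos: "finite V \<Longrightarrow> v \<in> V \<Longrightarrow> f v \<noteq> 0 \<Longrightarrow> inner_on V f f > 0"
  using inner_on_self_eq_0_iff inner_on_self_nonneg by (metis order_le_less)

lemma square_le_inner_on_self: "finite V \<Longrightarrow> v \<in> V \<Longrightarrow> (f v)\<^sup>2 \<le> inner_on V f f"
  unfolding inner_on_def power2_eq_square by (rule member_le_sum) auto

lemma inner_on_indicator_left:
  "finite V \<Longrightarrow> X \<subseteq> V \<Longrightarrow> inner_on V (indicator X) g = (\<Sum>v\<in>X. g v)"
  unfolding inner_on_def by (simp add: Int_absorb1)

lemma inner_on_sum_left:
  "inner_on V (\<lambda>v. \<Sum>\<mu>\<in>F. f \<mu> v) g = (\<Sum>\<mu>\<in>F. inner_on V (f \<mu>) g)"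
  unfolding inner_on_def sum_distrib_right by (rule sum.swap)

lemma inner_on_sum_right:
  "inner_on V g (\<lambda>v. \<Sum>\<mu>\<in>F. f \<mu> v) = (\<Sum>\<mu>\<in>F. inner_on V g (f \<mu>))"
  unfolding inner_on_def sum_distrib_left by (rule sum.swap)

lemma inner_on_orthonormal_combination:
  assumes "finite F"
    and orthonormal: "\<forall>\<mu>\<in>F. \<forall>\<nu>\<in>F. inner_on V (u \<mu>) (u \<nu>) = (if \<mu> = \<nu> then 1 else 0)"
  shows "inner_on V (\<lambda>v. \<Sum>\<mu>\<in>F. c \<mu> * u \<mu> v) (\<lambda>v. \<Sum>\<mu>\<in>F. c \<mu> * u \<mu> v) = (\<Sum>\<mu>\<in>F. (c \<mu>)\<^sup>2)"
proof -
  have "inner_on V (\<lambda>v. \<Sum>\<mu>\<in>F. c \<mu> * u \<mu> v) (\<lambda>v. \<Sum>\<mu>\<in>F. c \<mu> * u \<mu> v)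
      = (\<Sum>\<mu>\<in>F. \<Sum>\<nu>\<in>F. c \<mu> * c \<nu> * inner_on V (u \<mu>) (u \<nu>))"
    unfolding inner_on_sum_left inner_on_scale_left inner_on_sum_right inner_on_scale_right
    by (simp add: sum_distrib_left mult.assoc)
  also have "\<dots> = (\<Sum>\<mu>\<in>F. \<Sum>\<nu>\<in>F. if \<mu> = \<nu> then c \<mu> * c \<nu> else 0)"
    using orthonormal by (intro sum.cong) auto
  also have "\<dots> = (\<Sum>\<mu>\<in>F. (c \<mu>)\<^sup>2)"
    using \<open>finite F\<close> by (simp add: power2_eq_square)
  finally show ?thesis .
qed

lemma card_orthonormal_le:
  assumes "finite V" "finite F"
    and orthonormal: "\<forall>\<mu>\<in>F. \<forall>\<nu>\<in>F. inner_on V (u \<mu>) (u \<nu>) = (if \<mu> = \<nu> then 1 else 0)"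
  shows "card F \<le> card V"
proof -
  \<comment> \<open>Bessel's inequality for the point mass at v\<close>
  have pointwise: "(\<Sum>\<mu>\<in>F. (u \<mu> v)\<^sup>2) \<le> 1" if "v \<in> V" for v
  proof -
    define s where "s = (\<Sum>\<mu>\<in>F. (u \<mu> v)\<^sup>2)"
    define w where "w = (\<lambda>x. \<Sum>\<mu>\<in>F. u \<mu> v * u \<mu> x)"
    have "s\<^sup>2 = (w v)\<^sup>2"
      unfolding s_def w_def by (simp add: power2_eq_square)
    also have "\<dots> \<le> inner_on V w w"
      using square_le_inner_on_self[OF \<open>finite V\<close> \<open>v \<in> V\<close>] .
    also have "\<dots> = s"
      unfolding w_def s_def using inner_on_orthonormal_combination[OF \<open>finite F\<close> orthonormal] .
    finally have "s * s \<le> s * 1" by (simp add: power2_eq_square)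
    moreover have "s \<ge> 0" unfolding s_def by (simp add: sum_nonneg)
    ultimately show ?thesis unfolding s_def[symmetric] by (cases "s = 0") auto
  qed
  have "real (card F) = (\<Sum>\<mu>\<in>F. inner_on V (u \<mu>) (u \<mu>))"
    using orthonormal by simp
  also have "\<dots> = (\<Sum>v\<in>V. \<Sum>\<mu>\<in>F. (u \<mu> v)\<^sup>2)"
    unfolding inner_on_def power2_eq_square by (rule sum.swap)
  also have "\<dots> \<le> real (card V)"
    using sum_mono[OF pointwise] by simp
  finally show ?thesis by simp
qed

lemma simple_graph_symp: "simple_graph V E \<Longrightarrow> symp E"
  unfolding simple_graph_def symp_def by blast

lemma simple_graph_finite: "simple_graph V E \<Longrightarrow> finite V"
  unfolding simple_graph_def by blast

lemma adj_op_lincomb: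
  "adj_op V E (\<lambda>v. a * f v + b * g v) u = a * adj_op V E f u + b * adj_op V E g u"
  unfolding adj_op_def sum_distrib_left sum.distrib[symmetric] by (rule sum.cong) auto

lemma adj_op_scale: "adj_op V E (\<lambda>v. c * f v) = (\<lambda>u. c * adj_op V E f u)"
  using adj_op_lincomb[of V E c f 0 f] by auto

lemma adj_op_sum: "adj_op V E (\<lambda>v. \<Sum>i\<in>I. f i v) u = (\<Sum>i\<in>I. adj_op V E (f i) u)"
  unfolding adj_op_def by (subst sum.swap) (auto intro!: sum.cong)

lemma adj_op_outside: "simple_graph V E \<Longrightarrow> u \<notin> V \<Longrightarrow> adj_op V E f u = 0"
  unfolding adj_op_def simple_graph_def by (auto intro!: sum.neutral)

lemma adj_op_indicator:
  "finite V \<Longrightarrow> X \<subseteq> V \<Longrightarrow> adj_op V E (indicator X) u = real (card {v \<in> X. E u v})"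
  unfolding adj_op_def indicator_def
  by (simp add: sum.If_cases Int_def conj_commute) (metis (no_types, lifting) Collect_cong subsetD)

lemma adj_op_self_adjoint:
  assumes "symp E"
  shows "inner_on V f (adj_op V E g) = inner_on V (adj_op V E f) g"
proof -
  have "inner_on V f (adj_op V E g) = (\<Sum>u\<in>V. \<Sum>v\<in>V. if E u v then f u * g v else 0)"
    unfolding inner_on_def adj_op_def sum_distrib_left by (intro sum.cong) auto
  also have "\<dots> = (\<Sum>v\<in>V. \<Sum>u\<in>V. if E v u then f u * g v else 0)"
    using assms by (subst sum.swap) (auto simp: symp_def intro!: sum.cong)
  also have "\<dots> = inner_on V (adj_op V E f) g"
    unfolding inner_on_def adj_op_def sum_distrib_right by (intro sum.cong) auto
  finally show ?thesis .
qed

lemma adj_op_eigenvectors_orthogonal: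
  assumes "symp E" and "\<mu> \<noteq> \<nu>"
    and f: "\<forall>u\<in>V. adj_op V E f u = \<mu> * f u" and g: "\<forall>u\<in>V. adj_op V E g u = \<nu> * g u"
  shows "inner_on V f g = 0"
proof -
  have "\<mu> * inner_on V f g = inner_on V (adj_op V E f) g"
    using f by (simp add: inner_on_scale_left[symmetric] cong: inner_on_cong)
  also have "\<dots> = inner_on V f (adj_op V E g)"
    using adj_op_self_adjoint[OF \<open>symp E\<close>] by simp
  also have "\<dots> = \<nu> * inner_on V f g"
    using g by (simp add: inner_on_scale_right[symmetric] cong: inner_on_cong)
  finally show ?thesis using \<open>\<mu> \<noteq> \<nu>\<close> by simp
qed

lemma edges_between_eq_inner_on:
  assumes "finite V" "B \<subseteq> V" "C \<subseteq> V"
  shows "real (edges_between E B C) = inner_on V (indicator B) (adj_op V E (indicator C))"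
proof -
  have "finite B" "finite C" using assms finite_subset by auto
  have "inner_on V (indicator B) (adj_op V E (indicator C)) = (\<Sum>u\<in>B. real (card {v \<in> C. E u v}))"
    using assms by (simp add: inner_on_indicator_left adj_op_indicator)
  also have "\<dots> = real (card (SIGMA u:B. {v \<in> C. E u v}))"
    using \<open>finite B\<close> \<open>finite C\<close> by simp
  also have "(SIGMA u:B. {v \<in> C. E u v}) = {(u, v). u \<in> B \<and> v \<in> C \<and> E u v}"
    by auto
  finally show ?thesis unfolding edges_between_def by simp
qed

lemma W_perp_lincomb:
  "f \<in> W_perp V k P \<Longrightarrow> g \<in> W_perp V k P \<Longrightarrow> (\<lambda>v. a * f v + b * g v) \<in> W_perp V k P"
  unfolding W_perp_def by (simp add: sum.distrib sum_distrib_left[symmetric])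

lemma closed_W_perp: "closed (W_perp V k P)"
proof -
  have "W_perp V k P = (\<Inter>x\<in>-V. {f. f x = 0}) \<inter> (\<Inter>i<k. {f. sum f (P i) = 0})"
    unfolding W_perp_def by auto
  then show ?thesis
    by (auto intro!: closed_Int closed_INT closed_Collect_eq continuous_on_sum)
qed

definition adj_form :: "'a set \<Rightarrow> ('a \<Rightarrow> 'a \<Rightarrow> bool) \<Rightarrow> ('a \<Rightarrow> real) \<Rightarrow> real" where
  "adj_form V E f = inner_on V f (adj_op V E f)"

lemma adj_form_lincomb:
  assumes "symp E"
  shows "adj_form V E (\<lambda>v. f v + t * g v)
    = adj_form V E f + 2 * t * inner_on V g (adj_op V E f) + t\<^sup>2 * adj_form V E g"
proof -
  have "adj_op V E (\<lambda>v. f v + t * g v) = (\<lambda>u. adj_op V E f u + t * adj_op V E g u)"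
    using adj_op_lincomb[of V E 1 f t g] by auto
  then have "adj_form V E (\<lambda>v. f v + t * g v)
      = adj_form V E f + t * inner_on V f (adj_op V E g) + t * inner_on V g (adj_op V E f)
        + t\<^sup>2 * adj_form V E g"
    using inner_on_lincomb_left[of V 1 f t g] inner_on_lincomb_right[of V _ 1 _ t]
    unfolding adj_form_def by (simp add: algebra_simps power2_eq_square)
  moreover have "inner_on V f (adj_op V E g) = inner_on V g (adj_op V E f)"
    using adj_op_self_adjoint[OF assms, of V f g] inner_on_commute[of V "adj_op V E f" g] by simp
  ultimately show ?thesis by simp
qed

lemma adj_form_scale: "adj_form V E (\<lambda>v. c * f v) = c\<^sup>2 * adj_form V E f"
  unfolding adj_form_def adj_op_scale inner_on_scale_left inner_on_scale_right
  by (simp add: power2_eq_square)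

lemma continuous_on_adj_form: "continuous_on UNIV (adj_form V E)"
proof -
  have "adj_form V E = (\<lambda>f. \<Sum>u\<in>V. f u * (\<Sum>v\<in>V. (if E u v then 1 else 0) * f v))"
    unfolding adj_form_def inner_on_def adj_op_def by (intro ext sum.cong refl arg_cong2[where f = "(*)"]) auto
  then show ?thesis by (auto intro!: continuous_intros)
qed

lemma linear_coeff_eq_0_if_quadratic_nonpos:
  fixes a b :: real
  assumes "\<And>t. a * t + b * t\<^sup>2 \<le> 0"
  shows "a = 0"
proof (rule ccontr)
  assume "a \<noteq> 0"
  define d where "d = \<bar>b\<bar> + 1"
  have "d > 0" "d + b > 0" unfolding d_def by auto
  then have "a * (a / d) + b * (a / d)\<^sup>2 = a\<^sup>2 * (d + b) / d\<^sup>2"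
    by (simp add: field_simps power2_eq_square)
  also have "\<dots> > 0"
    using \<open>a \<noteq> 0\<close> \<open>d > 0\<close> \<open>d + b > 0\<close> by simp
  finally show False using assms[of "a / d"] by simp
qed

text \<open>Needed because \<^const>\<open>lambda_B\<close> is a \<^const>\<open>Max\<close>, which is unspecified on infinite sets.\<close>

lemma finite_bulk_eigenvalues:
  assumes "simple_graph V E"
  shows "finite (bulk_eigenvalues V E k P)"
proof (rule ccontr)
  have "finite V" using simple_graph_finite[OF assms] .
  assume "infinite (bulk_eigenvalues V E k P)"
  then obtain F where F: "finite F" "card F = Suc (card V)" "F \<subseteq> bulk_eigenvalues V E k P"
    using infinite_arbitrarily_large by blast
  then have "\<forall>\<mu>\<in>F. \<exists>f. (\<exists>x\<in>V. f x \<noteq> 0) \<and> (\<forall>u\<in>V. adj_op V E f u = \<mu> * f u)"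
    unfolding bulk_eigenvalues_def by blast
  then obtain g where g_nonzero: "\<And>\<mu>. \<mu> \<in> F \<Longrightarrow> \<exists>x\<in>V. g \<mu> x \<noteq> 0"
    and g_eigen: "\<And>\<mu>. \<mu> \<in> F \<Longrightarrow> \<forall>u\<in>V. adj_op V E (g \<mu>) u = \<mu> * g \<mu> u"
    by metis
  have g_pos: "inner_on V (g \<mu>) (g \<mu>) > 0" if "\<mu> \<in> F" for \<mu>
    using g_nonzero[OF that] inner_on_self_pos[OF \<open>finite V\<close>] by blast
  define u where "u = (\<lambda>\<mu> v. (1 / sqrt (inner_on V (g \<mu>) (g \<mu>))) * g \<mu> v)"
  have "\<forall>\<mu>\<in>F. \<forall>\<nu>\<in>F. inner_on V (u \<mu>) (u \<nu>) = (if \<mu> = \<nu> then 1 else 0)"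
  proof (intro ballI)
    fix \<mu> \<nu> assume "\<mu> \<in> F" "\<nu> \<in> F"
    show "inner_on V (u \<mu>) (u \<nu>) = (if \<mu> = \<nu> then 1 else 0)"
    proof (cases "\<mu> = \<nu>")
      case True
      then show ?thesis
        using g_pos[OF \<open>\<mu> \<in> F\<close>] unfolding u_def inner_on_scale_left inner_on_scale_right
        by (simp add: field_simps)
    next
      case False
      then have "inner_on V (g \<mu>) (g \<nu>) = 0"
        using g_eigen \<open>\<mu> \<in> F\<close> \<open>\<nu> \<in> F\<close> simple_graph_symp[OF assms]
        by (blast intro: adj_op_eigenvectors_orthogonal)
      then show ?thesis
        using False unfolding u_def inner_on_scale_left inner_on_scale_right by simp
    qed
  qed
  then have "card F \<le> card V"
    using card_orthonormal_le[OF \<open>finite V\<close> \<open>finite F\<close>] by blast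
  then show False using F(2) by simp
qed

lemma compact_W_perp_unit_sphere:
  assumes "finite V"
  shows "compact (W_perp V k P \<inter> {f. inner_on V f f = 1})" (is "compact ?K")
proof -
  define cube where "cube = PiE UNIV (\<lambda>v. if v \<in> V then {-1..1::real} else {0})"
  have "compactin (product_topology (\<lambda>_. euclidean) UNIV) cube"
    unfolding cube_def compactin_PiE by simp
  then have "compact cube"
    by (simp add: euclidean_product_topology)
  have "?K \<subseteq> cube"
  proof
    fix f assume "f \<in> ?K"
    then have "\<bar>f v\<bar> \<le> 1" if "v \<in> V" for v
      using square_le_inner_on_self[OF assms that, of f] by (simp add: abs_square_le_1)
    then show "f \<in> cube"
      using \<open>f \<in> ?K\<close> unfolding cube_def W_perp_def by (auto simp: abs_le_iff)
  qed
  have "closed ?K"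
    unfolding inner_on_def
    by (intro closed_Int closed_W_perp closed_Collect_eq) (auto intro!: continuous_intros)
  then have "compact (cube \<inter> ?K)"
    by (rule compact_Int_closed[OF \<open>compact cube\<close>])
  then show ?thesis
    using \<open>?K \<subseteq> cube\<close> by (simp add: Int_absorb1)
qed

locale W_perp_invariant =
  fixes V :: "'a set" and E :: "'a \<Rightarrow> 'a \<Rightarrow> bool" and k :: nat and P :: "nat \<Rightarrow> 'a set"
  assumes simple: "simple_graph V E"
    and adj_op_W_perp: "f \<in> W_perp V k P \<Longrightarrow> adj_op V E f \<in> W_perp V k P"
begin

lemma Rayleigh_extremal_is_eigenvector:
  assumes x: "x \<in> W_perp V k P" and "s \<noteq> 0"
    and extremal: "\<And>z. z \<in> W_perp V k P \<Longrightarrow> s * adj_form V E z \<le> s * \<mu> * inner_on V z z"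
    and attained: "adj_form V E x = \<mu> * inner_on V x x"
  shows "\<forall>u\<in>V. adj_op V E x u = \<mu> * x u"
proof -
  define y where "y = (\<lambda>v. adj_op V E x v - \<mu> * x v)"
  have y: "y \<in> W_perp V k P"
    using W_perp_lincomb[OF adj_op_W_perp[OF x] x, of 1 "- \<mu>"] by (simp add: y_def)
  have "inner_on V y (adj_op V E x) - \<mu> * inner_on V x y = inner_on V y y"
    unfolding y_def inner_on_diff_right inner_on_diff_left inner_on_scale_left inner_on_scale_right
    by (simp add: inner_on_commute algebra_simps)
  \<comment> \<open>first-order condition at x in the direction y = A x - \<mu> x\<close>
  then have expand:
    "s * (adj_form V E (\<lambda>v. x v + t * y v) - \<mu> * inner_on V (\<lambda>v. x v + t * y v) (\<lambda>v. x v + t * y v))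
      = (2 * s * inner_on V y y) * t + (s * (adj_form V E y - \<mu> * inner_on V y y)) * t\<^sup>2" for t
    unfolding adj_form_lincomb[OF simple_graph_symp[OF simple]] inner_on_self_lincomb attained
    by (simp add: algebra_simps inner_on_commute[of V x y])
  have "(2 * s * inner_on V y y) * t + (s * (adj_form V E y - \<mu> * inner_on V y y)) * t\<^sup>2 \<le> 0" for t
    using extremal[OF W_perp_lincomb[OF x y, of 1 t]] unfolding expand[symmetric]
    by (simp add: algebra_simps)
  then have "2 * s * inner_on V y y = 0"
    by (rule linear_coeff_eq_0_if_quadratic_nonpos)
  then have "\<forall>v\<in>V. y v = 0"
    using \<open>s \<noteq> 0\<close> inner_on_self_eq_0_iff[OF simple_graph_finite[OF simple]] by simp
  then show ?thesis unfolding y_def by simp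
qed

lemma Rayleigh_extremum_exists:
  assumes "f \<in> W_perp V k P" "w \<in> V" "f w \<noteq> 0"
  obtains x where "x \<in> W_perp V k P" "inner_on V x x = 1"
    "\<And>z. z \<in> W_perp V k P \<Longrightarrow> s * adj_form V E z \<le> s * adj_form V E x * inner_on V z z"
proof -
  define K where "K = W_perp V k P \<inter> {f. inner_on V f f = 1}"
  have "compact K"
    unfolding K_def using compact_W_perp_unit_sphere[OF simple_graph_finite[OF simple]] .
  have normalized_in_K: "(\<lambda>v. (1 / sqrt (inner_on V z z)) * z v) \<in> K"
    if "z \<in> W_perp V k P" "inner_on V z z > 0" for z
  proof -
    have "inner_on V (\<lambda>v. (1 / sqrt (inner_on V z z)) * z v) (\<lambda>v. (1 / sqrt (inner_on V z z)) * z v) = 1"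
      using \<open>inner_on V z z > 0\<close> unfolding inner_on_scale_left inner_on_scale_right by simp
    moreover have "(\<lambda>v. (1 / sqrt (inner_on V z z)) * z v) \<in> W_perp V k P"
      using W_perp_lincomb[OF that(1) that(1), of "1 / sqrt (inner_on V z z)" 0] by simp
    ultimately show ?thesis unfolding K_def by simp
  qed
  have "K \<noteq> {}"
    using normalized_in_K[OF \<open>f \<in> W_perp V k P\<close>] assms(3)
      inner_on_self_pos[OF simple_graph_finite[OF simple] assms(2), of f]
    by blast
  moreover have "continuous_on K (\<lambda>f. s * adj_form V E f)"
    using continuous_on_subset[OF continuous_on_adj_form subset_UNIV]
    by (intro continuous_intros)
  ultimately obtain x where "x \<in> K" and x_max: "\<And>y. y \<in> K \<Longrightarrow> s * adj_form V E y \<le> s * adj_form V E x"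
    using continuous_attains_sup[OF \<open>compact K\<close>] by blast
  have "s * adj_form V E z \<le> s * adj_form V E x * inner_on V z z" if "z \<in> W_perp V k P" for z
  proof (cases "inner_on V z z = 0")
    case True
    then have "adj_form V E z = 0"
      unfolding adj_form_def using inner_on_self_eq_0_iff[OF simple_graph_finite[OF simple]]
      by (blast intro: inner_on_vanishing_left)
    then show ?thesis using True by simp
  next
    case False
    then have pos: "inner_on V z z > 0" using inner_on_self_nonneg[of V z] by linarith
    have "s * adj_form V E z / inner_on V z z \<le> s * adj_form V E x"
      using x_max[OF normalized_in_K[OF that pos]] pos unfolding adj_form_scale
      by (simp add: power2_eq_square)
    then show ?thesis using pos by (simp add: divide_le_eq mult.commute)
  qed
  then show ?thesis using that \<open>x \<in> K\<close> unfolding K_def by blast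
qed

lemma bulk_eigenvalue_bounds_adj_form:
  assumes "s \<noteq> 0" and "f \<in> W_perp V k P" "w \<in> V" "f w \<noteq> 0"
  obtains \<mu> where "\<mu> \<in> bulk_eigenvalues V E k P"
    "\<And>z. z \<in> W_perp V k P \<Longrightarrow> s * adj_form V E z \<le> s * \<mu> * inner_on V z z"
proof -
  obtain x where x: "x \<in> W_perp V k P" "inner_on V x x = 1"
    and extremal: "\<And>z. z \<in> W_perp V k P \<Longrightarrow> s * adj_form V E z \<le> s * adj_form V E x * inner_on V z z"
    using Rayleigh_extremum_exists[OF assms(2-4)] by blast
  have "\<forall>u\<in>V. adj_op V E x u = adj_form V E x * x u"
    using Rayleigh_extremal_is_eigenvector[OF x(1) \<open>s \<noteq> 0\<close> extremal] x(2) by simp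
  moreover have "\<exists>v\<in>V. x v \<noteq> 0"
    using x(2) inner_on_vanishing_left[of V x x] by force
  ultimately have "adj_form V E x \<in> bulk_eigenvalues V E k P"
    unfolding bulk_eigenvalues_def using x(1) by blast
  then show ?thesis using that extremal by blast
qed

lemma abs_adj_form_le:
  assumes "z \<in> W_perp V k P"
  shows "\<bar>adj_form V E z\<bar> \<le> lambda_B V E k P * inner_on V z z"
proof (cases "\<forall>v\<in>V. z v = 0")
  case True
  then have "adj_form V E z = 0" "inner_on V z z = 0"
    unfolding adj_form_def by (auto intro: inner_on_vanishing_left)
  then show ?thesis by simp
next
  case False
  then obtain w where "w \<in> V" "z w \<noteq> 0" by blast
  have bounded: "\<mu> * inner_on V z z \<le> lambda_B V E k P * inner_on V z z"
    "- (\<mu> * inner_on V z z) \<le> lambda_B V E k P * inner_on V z z"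
    if "\<mu> \<in> bulk_eigenvalues V E k P" for \<mu>
  proof -
    have "\<bar>\<mu>\<bar> \<le> lambda_B V E k P"
      unfolding lambda_B_def using finite_bulk_eigenvalues[OF simple] that by (intro Max_ge) auto
    then have "\<mu> \<le> lambda_B V E k P" "- \<mu> \<le> lambda_B V E k P" by auto
    then show "\<mu> * inner_on V z z \<le> lambda_B V E k P * inner_on V z z"
      "- (\<mu> * inner_on V z z) \<le> lambda_B V E k P * inner_on V z z"
      using mult_right_mono[OF _ inner_on_self_nonneg, of _ _ V z] by (simp, force)
  qed
  obtain \<mu>\<^sub>1 where \<mu>\<^sub>1: "\<mu>\<^sub>1 \<in> bulk_eigenvalues V E k P" "adj_form V E z \<le> \<mu>\<^sub>1 * inner_on V z z"
    using bulk_eigenvalue_bounds_adj_form[of 1, OF _ assms \<open>w \<in> V\<close> \<open>z w \<noteq> 0\<close>] assms by auto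
  obtain \<mu>\<^sub>2 where \<mu>\<^sub>2: "\<mu>\<^sub>2 \<in> bulk_eigenvalues V E k P" "adj_form V E z \<ge> \<mu>\<^sub>2 * inner_on V z z"
    using bulk_eigenvalue_bounds_adj_form[of "-1", OF _ assms \<open>w \<in> V\<close> \<open>z w \<noteq> 0\<close>] assms by auto
  show ?thesis
    using bounded(1)[OF \<mu>\<^sub>1(1)] bounded(2)[OF \<mu>\<^sub>2(1)] \<mu>\<^sub>1(2) \<mu>\<^sub>2(2) by linarith
qed

lemma abs_inner_adj_le_mean:
  assumes a: "a \<in> W_perp V k P" and b: "b \<in> W_perp V k P"
  shows "\<bar>inner_on V a (adj_op V E b)\<bar> \<le> lambda_B V E k P * (inner_on V a a + inner_on V b b) / 2"
proof -
  define p where "p = (\<lambda>v. a v + 1 * b v)"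
  define m where "m = (\<lambda>v. a v + (- 1) * b v)"
  have "p \<in> W_perp V k P" "m \<in> W_perp V k P"
    using W_perp_lincomb[OF a b, of 1 1] W_perp_lincomb[OF a b, of 1 "- 1"]
    unfolding p_def m_def by simp_all
  have "adj_form V E p - adj_form V E m = 4 * inner_on V b (adj_op V E a)"
    unfolding p_def m_def adj_form_lincomb[OF simple_graph_symp[OF simple]] by simp
  also have "inner_on V b (adj_op V E a) = inner_on V a (adj_op V E b)"
    using adj_op_self_adjoint[OF simple_graph_symp[OF simple], of V b a]
      inner_on_commute[of V "adj_op V E b" a] by simp
  finally have "4 * \<bar>inner_on V a (adj_op V E b)\<bar> = \<bar>adj_form V E p - adj_form V E m\<bar>"
    by simp
  also have "\<dots> \<le> \<bar>adj_form V E p\<bar> + \<bar>adj_form V E m\<bar>"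
    by (rule abs_triangle_ineq4)
  also have "\<dots> \<le> lambda_B V E k P * (inner_on V p p + inner_on V m m)"
    using abs_adj_form_le[OF \<open>p \<in> W_perp V k P\<close>] abs_adj_form_le[OF \<open>m \<in> W_perp V k P\<close>]
    by (simp add: distrib_left)
  also have "inner_on V p p + inner_on V m m = 2 * (inner_on V a a + inner_on V b b)"
    unfolding p_def m_def inner_on_self_lincomb by simp
  finally show ?thesis by (simp add: algebra_simps)
qed

lemma abs_inner_adj_le:
  assumes x: "x \<in> W_perp V k P" and y: "y \<in> W_perp V k P"
  shows "\<bar>inner_on V x (adj_op V E y)\<bar>
    \<le> lambda_B V E k P * sqrt (inner_on V x x) * sqrt (inner_on V y y)"
proof (cases "inner_on V x x = 0 \<or> inner_on V y y = 0")
  case True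
  then have "(\<forall>v\<in>V. x v = 0) \<or> (\<forall>v\<in>V. y v = 0)"
    using inner_on_self_eq_0_iff[OF simple_graph_finite[OF simple]] by blast
  moreover have "inner_on V x (adj_op V E y) = inner_on V y (adj_op V E x)"
    using adj_op_self_adjoint[OF simple_graph_symp[OF simple], of V x y]
      inner_on_commute[of V "adj_op V E x" y] by simp
  ultimately have "inner_on V x (adj_op V E y) = 0"
    using inner_on_vanishing_left[of V x] inner_on_vanishing_left[of V y] by force
  then show ?thesis using True by auto
next
  case False
  define s where "s = sqrt (inner_on V x x)"
  define t where "t = sqrt (inner_on V y y)"
  have "s > 0" "t > 0" "s\<^sup>2 = inner_on V x x" "t\<^sup>2 = inner_on V y y"
    using False inner_on_self_nonneg[of V x] inner_on_self_nonneg[of V y]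
    unfolding s_def t_def by auto
  \<comment> \<open>rescale both vectors to the common norm \<open>s t\<close>, where the mean bound is sharp\<close>
  have "s * t * \<bar>inner_on V x (adj_op V E y)\<bar> = \<bar>inner_on V (\<lambda>v. t * x v) (adj_op V E (\<lambda>v. s * y v))\<bar>"
    using \<open>s > 0\<close> \<open>t > 0\<close>
    by (simp add: adj_op_scale inner_on_scale_left inner_on_scale_right abs_mult)
  also have "\<dots> \<le> lambda_B V E k P
      * (inner_on V (\<lambda>v. t * x v) (\<lambda>v. t * x v) + inner_on V (\<lambda>v. s * y v) (\<lambda>v. s * y v)) / 2"
    using W_perp_lincomb[OF x x, of t 0] W_perp_lincomb[OF y y, of s 0]
    by (intro abs_inner_adj_le_mean) simp_all
  also have "\<dots> = s * t * (lambda_B V E k P * s * t)"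
    unfolding inner_on_scale_left inner_on_scale_right
      \<open>s\<^sup>2 = inner_on V x x\<close>[symmetric] \<open>t\<^sup>2 = inner_on V y y\<close>[symmetric]
    by (simp add: power2_eq_square)
  finally show ?thesis
    using \<open>s > 0\<close> \<open>t > 0\<close> unfolding s_def[symmetric] t_def[symmetric] by simp
qed

end

locale equitable_partition =
  fixes V :: "'a set" and E :: "'a \<Rightarrow> 'a \<Rightarrow> bool" and k :: nat and P :: "nat \<Rightarrow> 'a set"
    and S :: "nat \<Rightarrow> nat \<Rightarrow> nat"
  assumes simple: "simple_graph V E" and regular: "S_regular V E k P S"
begin

lemma cell_subset: "i < k \<Longrightarrow> P i \<subseteq> V"
  using regular unfolding S_regular_def by blast

lemma finite_cell: "i < k \<Longrightarrow> finite (P i)"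
  using cell_subset simple_graph_finite[OF simple] finite_subset by blast

lemma card_cell_pos: "i < k \<Longrightarrow> card (P i) > 0"
  using regular finite_cell unfolding S_regular_def by (simp add: card_gt_0_iff)

lemma cells_disjoint: "i < k \<Longrightarrow> j < k \<Longrightarrow> i \<noteq> j \<Longrightarrow> P i \<inter> P j = {}"
  using regular unfolding S_regular_def by blast

lemma cells_cover: "(\<Union>i<k. P i) = V"
  using regular unfolding S_regular_def by blast

lemma card_neighbours_in_cell: "i < k \<Longrightarrow> j < k \<Longrightarrow> u \<in> P i \<Longrightarrow> card {v \<in> P j. E u v} = S i j"
  using regular unfolding S_regular_def by blast

lemma sum_over_cells: "(\<Sum>v\<in>V. g v) = (\<Sum>j<k. \<Sum>v\<in>P j. g v)"
  using sum.UNION_disjoint[of "{..<k}" P g] finite_cell cells_disjoint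
  unfolding cells_cover by (simp add: disjoint_iff)

definition cell_fun :: "(nat \<Rightarrow> real) \<Rightarrow> 'a \<Rightarrow> real" where
  "cell_fun c v = (\<Sum>i<k. c i * indicator (P i) v)"

lemma cell_fun_eq: "j < k \<Longrightarrow> v \<in> P j \<Longrightarrow> cell_fun c v = c j"
  unfolding cell_fun_def using cells_disjoint[of _ j]
  by (subst sum.remove[of _ j]) (auto intro!: sum.neutral simp: indicator_def)

lemma cell_fun_outside: "v \<notin> V \<Longrightarrow> cell_fun c v = 0"
  unfolding cell_fun_def using cell_subset by (auto intro!: sum.neutral simp: indicator_def)

lemma inner_on_cell_fun_left: "inner_on V (cell_fun c) f = (\<Sum>j<k. c j * (\<Sum>v\<in>P j. f v))"
  unfolding inner_on_def sum_over_cells by (auto simp: sum_distrib_left cell_fun_eq intro!: sum.cong)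

lemma inner_on_cell_fun_W_perp: "f \<in> W_perp V k P \<Longrightarrow> inner_on V (cell_fun c) f = 0"
  unfolding inner_on_cell_fun_left W_perp_def by simp

lemma adj_op_indicator_cell:
  assumes "i < k" "j < k" "v \<in> P j"
  shows "adj_op V E (indicator (P i)) v = real (S j i)"
  using adj_op_indicator[OF simple_graph_finite[OF simple] cell_subset[OF \<open>i < k\<close>]]
    card_neighbours_in_cell[OF \<open>j < k\<close> \<open>i < k\<close> \<open>v \<in> P j\<close>] by simp

lemma adj_op_cell_fun:
  assumes "j < k" "v \<in> P j"
  shows "adj_op V E (cell_fun c) v = (\<Sum>i<k. c i * real (S j i))"
  unfolding cell_fun_def[abs_def] adj_op_sum adj_op_scale
  using adj_op_indicator_cell[OF _ assms] by simp

lemma adj_op_preserves_W_perp: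
  assumes "f \<in> W_perp V k P"
  shows "adj_op V E f \<in> W_perp V k P"
proof -
  have "(\<Sum>v\<in>P i. adj_op V E f v) = 0" if "i < k" for i
  proof -
    have "(\<Sum>v\<in>P i. adj_op V E f v) = inner_on V (indicator (P i)) (adj_op V E f)"
      using inner_on_indicator_left[OF simple_graph_finite[OF simple] cell_subset[OF that]] by simp
    also have "\<dots> = inner_on V (adj_op V E (indicator (P i))) f"
      by (rule adj_op_self_adjoint[OF simple_graph_symp[OF simple]])
    also have "\<dots> = inner_on V (cell_fun (\<lambda>j. real (S j i))) f"
    proof (rule inner_on_cong)
      fix v assume "v \<in> V"
      then obtain j where "j < k" "v \<in> P j" using cells_cover by blast
      then show "adj_op V E (indicator (P i)) v = cell_fun (\<lambda>j. real (S j i)) v"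
        using adj_op_indicator_cell[OF that] cell_fun_eq by simp
    qed simp
    also have "\<dots> = 0"
      by (rule inner_on_cell_fun_W_perp[OF assms])
    finally show ?thesis .
  qed
  then show ?thesis
    using adj_op_outside[OF simple] unfolding W_perp_def by blast
qed

sublocale W_perp_invariant V E k P
  using simple adj_op_preserves_W_perp by unfold_locales

lemma card_cell_mult_S_symmetric:
  assumes "i < k" "j < k"
  shows "real (card (P i)) * real (S i j) = real (card (P j)) * real (S j i)"
proof -
  have count: "inner_on V (indicator (P i')) (adj_op V E (indicator (P j'))) = real (card (P i')) * real (S i' j')"
    if "i' < k" "j' < k" for i' j'
    using inner_on_indicator_left[OF simple_graph_finite[OF simple] cell_subset[OF \<open>i' < k\<close>]]
      adj_op_indicator_cell[OF \<open>j' < k\<close> \<open>i' < k\<close>] by simp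
  have "inner_on V (indicator (P i)) (adj_op V E (indicator (P j)))
      = inner_on V (indicator (P j)) (adj_op V E (indicator (P i)))"
    using adj_op_self_adjoint[OF simple_graph_symp[OF simple], of V "indicator (P i)"]
      inner_on_commute[of V "adj_op V E (indicator (P i))"] by simp
  then show ?thesis using count assms by simp
qed

lemma sqrt_S_product_eq:
  assumes "i < k" "j < k"
  shows "sqrt (real (S i j * S j i) / (real (card (P i)) * real (card (P j))))
    = real (S i j) / real (card (P j))"
proof -
  have "real (card (P i)) > 0" "real (card (P j)) > 0"
    using card_cell_pos assms by auto
  then have "real (S i j * S j i) / (real (card (P i)) * real (card (P j)))
      = (real (S i j) / real (card (P j)))\<^sup>2"
    using card_cell_mult_S_symmetric[OF assms] by (simp add: field_simps power2_eq_square)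
  then show ?thesis by simp
qed

lemma sum_indicator_cell: "j < k \<Longrightarrow> (\<Sum>v\<in>P j. indicator B v) = real (card (B \<inter> P j))"
  unfolding indicator_def using finite_cell by (simp add: sum.If_cases Int_def conj_commute)

definition cell_density :: "'a set \<Rightarrow> nat \<Rightarrow> real" where
  "cell_density B i = real (card (B \<inter> P i)) / real (card (P i))"

definition cell_deviation :: "'a set \<Rightarrow> 'a \<Rightarrow> real" where
  "cell_deviation B = (\<lambda>v. indicator B v - cell_fun (cell_density B) v)"

lemma cell_deviation_W_perp:
  assumes "B \<subseteq> V"
  shows "cell_deviation B \<in> W_perp V k P"
proof -
  have "(\<Sum>v\<in>P j. cell_deviation B v) = 0" if "j < k" for j
    using card_cell_pos[OF that]
    by (simp add: cell_deviation_def sum_subtractf cell_fun_eq[OF that] cell_density_def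
        sum_indicator_cell[OF that])
  moreover have "cell_deviation B v = 0" if "v \<notin> V" for v
    using that assms cell_fun_outside by (auto simp: cell_deviation_def indicator_def)
  ultimately show ?thesis unfolding W_perp_def by blast
qed

lemma inner_on_cell_deviation_self:
  assumes "B \<subseteq> V"
  shows "inner_on V (cell_deviation B) (cell_deviation B)
    = (\<Sum>i<k. real (card (B \<inter> P i)) * (1 - cell_density B i))"
proof -
  have "inner_on V (cell_deviation B) (cell_deviation B)
      = inner_on V (indicator B) (cell_deviation B)
        - inner_on V (cell_fun (cell_density B)) (cell_deviation B)"
    by (subst (1) cell_deviation_def) (rule inner_on_diff_left)
  also have "\<dots> = inner_on V (indicator B) (cell_deviation B)"
    using inner_on_cell_fun_W_perp[OF cell_deviation_W_perp[OF assms]] by simp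
  also have "\<dots> = inner_on V (indicator B) (indicator B)
      - inner_on V (cell_fun (cell_density B)) (indicator B)"
    unfolding cell_deviation_def inner_on_diff_right inner_on_commute[of V "indicator B" "cell_fun _"] ..
  also have "inner_on V (indicator B) (indicator B) = (\<Sum>i<k. real (card (B \<inter> P i)))"
    unfolding inner_on_def sum_over_cells by (simp add: sum_indicator_cell flip: indicator_inter_arith)
  also have "inner_on V (cell_fun (cell_density B)) (indicator B)
      = (\<Sum>i<k. cell_density B i * real (card (B \<inter> P i)))"
    unfolding inner_on_cell_fun_left by (simp add: sum_indicator_cell)
  also have "(\<Sum>i<k. real (card (B \<inter> P i))) - (\<Sum>i<k. cell_density B i * real (card (B \<inter> P i)))
      = (\<Sum>i<k. real (card (B \<inter> P i)) * (1 - cell_density B i))"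
    by (simp add: algebra_simps sum_subtractf)
  finally show ?thesis .
qed

lemma edges_between_cell_split:
  assumes "B \<subseteq> V" "C \<subseteq> V"
  shows "real (edges_between E B C)
    = inner_on V (cell_fun (cell_density B)) (adj_op V E (cell_fun (cell_density C)))
      + inner_on V (cell_deviation B) (adj_op V E (cell_deviation C))"
proof -
  let ?b = "cell_fun (cell_density B)" and ?c = "cell_fun (cell_density C)"
  let ?x = "cell_deviation B" and ?y = "cell_deviation C"
  have split_B: "indicator B = (\<lambda>v. 1 * ?b v + 1 * ?x v)"
    and split_C: "indicator C = (\<lambda>v. 1 * ?c v + 1 * ?y v)"
    unfolding cell_deviation_def by auto
  have "real (edges_between E B C) = inner_on V (indicator B) (adj_op V E (indicator C))"
    using edges_between_eq_inner_on[OF simple_graph_finite[OF simple] assms] .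
  also have "\<dots> = inner_on V ?b (adj_op V E ?c) + inner_on V ?b (adj_op V E ?y)
      + inner_on V ?x (adj_op V E ?c) + inner_on V ?x (adj_op V E ?y)"
    unfolding split_B split_C adj_op_lincomb[abs_def] inner_on_lincomb_left inner_on_lincomb_right
    by simp
  also have "inner_on V ?b (adj_op V E ?y) = 0"
    using inner_on_cell_fun_W_perp[OF adj_op_W_perp[OF cell_deviation_W_perp[OF assms(2)]]] .
  also have "inner_on V ?x (adj_op V E ?c) = inner_on V ?c (adj_op V E ?x)"
    using adj_op_self_adjoint[OF simple_graph_symp[OF simple], of V ?x ?c]
      inner_on_commute[of V "adj_op V E ?x" ?c] by simp
  also have "\<dots> = 0"
    using inner_on_cell_fun_W_perp[OF adj_op_W_perp[OF cell_deviation_W_perp[OF assms(1)]]] .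
  finally show ?thesis by simp
qed

lemma inner_on_cell_density_adj:
  "inner_on V (cell_fun (cell_density B)) (adj_op V E (cell_fun (cell_density C)))
    = (\<Sum>i<k. \<Sum>j<k. sqrt (real (S i j * S j i) / (real (card (P i)) * real (card (P j))))
        * real (card (B \<inter> P i)) * real (card (C \<inter> P j)))"
proof -
  have "inner_on V (cell_fun (cell_density B)) (adj_op V E (cell_fun (cell_density C)))
      = (\<Sum>i<k. cell_density B i * real (card (P i)) * (\<Sum>j<k. cell_density C j * real (S i j)))"
    unfolding inner_on_cell_fun_left by (simp add: adj_op_cell_fun mult.assoc)
  also have "\<dots> = (\<Sum>i<k. \<Sum>j<k. real (card (B \<inter> P i)) * (real (S i j) / real (card (P j)))
      * real (card (C \<inter> P j)))"
    using card_cell_pos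
    by (auto simp: cell_density_def sum_distrib_left field_simps intro!: sum.cong)
  also have "\<dots> = (\<Sum>i<k. \<Sum>j<k. sqrt (real (S i j * S j i) / (real (card (P i)) * real (card (P j))))
        * real (card (B \<inter> P i)) * real (card (C \<inter> P j)))"
    by (intro sum.cong refl) (simp add: sqrt_S_product_eq del: of_nat_mult)
  finally show ?thesis .
qed

end

theorem mainTheorem11:
  fixes V :: "'a set" and E :: "'a \<Rightarrow> 'a \<Rightarrow> bool" and k :: nat
    and P :: "nat \<Rightarrow> 'a set" and S :: "nat \<Rightarrow> nat \<Rightarrow> nat" and B C :: "'a set"
  assumes "simple_graph V E" and "connected_graph V E"
    and "S_regular V E k P S"
    and "card V > k"
    and "B \<subseteq> V" and "C \<subseteq> V"
  shows "\<bar>real (edges_between E B C)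
           - (\<Sum>i<k. \<Sum>j<k. sqrt (real (S i j * S j i) / (real (card (P i)) * real (card (P j))))
                * real (card (B \<inter> P i)) * real (card (C \<inter> P j)))\<bar>
         \<le> lambda_B V E k P *
           sqrt (\<Sum>i<k. \<Sum>j<k. real (card (B \<inter> P i)) * real (card (C \<inter> P j))
                  * (1 - real (card (B \<inter> P i)) / real (card (P i)))
                  * (1 - real (card (C \<inter> P j)) / real (card (P j))))"
proof -
  interpret equitable_partition V E k P S
    using assms(1,3) by unfold_locales
  let ?x = "cell_deviation B" and ?y = "cell_deviation C"
  have "(\<Sum>i<k. \<Sum>j<k. real (card (B \<inter> P i)) * real (card (C \<inter> P j))
                  * (1 - real (card (B \<inter> P i)) / real (card (P i)))
                  * (1 - real (card (C \<inter> P j)) / real (card (P j))))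
      = inner_on V ?x ?x * inner_on V ?y ?y"
    unfolding inner_on_cell_deviation_self[OF assms(5)] inner_on_cell_deviation_self[OF assms(6)]
      sum_product cell_density_def
    by (intro sum.cong refl) (simp add: mult_ac)
  moreover have "\<bar>inner_on V ?x (adj_op V E ?y)\<bar>
      \<le> lambda_B V E k P * sqrt (inner_on V ?x ?x) * sqrt (inner_on V ?y ?y)"
    using abs_inner_adj_le[OF cell_deviation_W_perp[OF assms(5)] cell_deviation_W_perp[OF assms(6)]] .
  ultimately show ?thesis
    unfolding edges_between_cell_split[OF assms(5,6)] inner_on_cell_density_adj[symmetric]
    by (simp add: real_sqrt_mult mult.assoc)
qed

end
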